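(* Let $x\ge 0$ and $y>0$ (the approximation is intended for the regime $x\ll y$). Then $$R_C(x,y)=\frac{\pi}{2\sqrt y}-\frac{\sqrt x}{y}+\frac{\pi x\theta}{4y^{3/2}},$$ where $\theta$ satisfies $\frac{1}{1+\sqrt{x/y}}\le\theta\le 1$, with equalities iff $x=0$.
   Context: For $x\ge 0$, $y>0$: $R_C(x,y)=\frac12\int_0^\infty (t+x)^{-1/2}(t+y)^{-1}\,dt$. *)

theory Defs
  imports "HOL-Analysis.Analysis"
begin

definition R_C :: "real \<Rightarrow> real \<Rightarrow> real" where
  "R_C x y = (1/2) * integral {0..} (\<lambda>t. (t + x) powr (-1/2) * inverse (t + y))"

end

theory Submission
  imports Defs "HOL-Real_Asymp.Real_Asymp"
begin

text \<open>The substitution t = (v + sqrt x)^2 - x turns R_C(x,y) into the integral over [0,oo) of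
  1/(w + p) with w = v^2 + y and p = 2 sqrt x v. Expanding 1/(w + p) = 1/w - p/w^2 + p^2/(w^2 (w + p)),
  the first two terms integrate to pi/(2 sqrt y) and sqrt x/y. Since w <= w + p <= (1 + sqrt(x/y)) w,
  the remainder p^2/(w^2 (w + p)) lies between p^2/((1 + sqrt(x/y)) w^3) and p^2/w^3, and the
  latter integrates to pi x/(4 y^(3/2)). For x > 0 both comparisons are strict at v = 2 sqrt y,
  so by continuity the bounds on theta are strict.\<close>

lemma fundamental_theorem_of_calculus_atLeast:
  fixes F f :: "real \<Rightarrow> real"
  assumes cont: "continuous_on {a..} F"
    and deriv: "\<And>t. t > a \<Longrightarrow> (F has_real_derivative f t) (at t)"
    and nonneg: "\<And>t. t \<ge> a \<Longrightarrow> f t \<ge> 0"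
    and lim: "(F \<longlongrightarrow> L) at_top"
  shows "(f has_integral (L - F a)) {a..}"
proof (rule has_integral_to_inf)
  have segment: "(f has_integral (F b - F a)) {a..b}" if "a \<le> b" for b
    using that cont deriv
    by (intro fundamental_theorem_of_calculus_interior)
       (auto intro: continuous_on_subset simp: has_real_derivative_iff_has_vector_derivative[symmetric])
  show "f integrable_on {a..b}" for b
    using segment by (cases "a \<le> b") auto
  have "((\<lambda>b. F b - F a) \<longlongrightarrow> L - F a) at_top"
    by (intro tendsto_intros lim)
  moreover have "\<forall>\<^sub>F b in at_top. F b - F a = integral {a..b} f"
    using eventually_ge_at_top[of a] by eventually_elim (use segment integral_unique in metis)
  ultimately show "((\<lambda>b. integral {a..b} f) \<longlongrightarrow> L - F a) at_top"
    by (rule Lim_transform_eventually)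
qed (use nonneg in auto)

lemma tendsto_integral_atLeastAtMost_at_top:
  fixes f :: "real \<Rightarrow> real"
  assumes int: "f integrable_on {a..}" and nonneg: "\<And>t. t \<ge> a \<Longrightarrow> f t \<ge> 0"
  shows "((\<lambda>b. integral {a..b} f) \<longlongrightarrow> integral {a..} f) at_top"
proof -
  have abs_int: "f absolutely_integrable_on {a..}"
    using int nonneg by (intro nonnegative_absolutely_integrable_1) auto
  then have "((\<lambda>b. LINT t:{a..b}|lebesgue. f t) \<longlongrightarrow> integral {a..} f) at_top"
    using tendsto_set_lebesgue_integral_at_top[of a lebesgue f]
    by (simp add: set_lebesgue_integral_eq_integral(2))
  moreover have "(LINT t:{a..b}|lebesgue. f t) = integral {a..b} f" for b
    using set_integrable_subset[OF abs_int, of "{a..b}"]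
    by (simp add: set_lebesgue_integral_eq_integral(2))
  ultimately show ?thesis by simp
qed

lemma has_integral_substitution_atLeast:
  fixes f \<phi> \<phi>' :: "real \<Rightarrow> real"
  assumes f: "continuous_on {\<phi> a..} f" "f integrable_on {\<phi> a..}" "\<And>v. v \<ge> \<phi> a \<Longrightarrow> f v \<ge> 0"
    and \<phi>: "continuous_on {a..} \<phi>" "mono_on {a..} \<phi>" "filterlim \<phi> at_top at_top"
    and \<phi>': "\<And>t. t > a \<Longrightarrow> (\<phi> has_real_derivative \<phi>' t) (at t)" "\<And>t. t \<ge> a \<Longrightarrow> \<phi>' t \<ge> 0"
  shows "((\<lambda>t. \<phi>' t * f (\<phi> t)) has_integral integral {\<phi> a..} f) {a..}"
proof (rule has_integral_to_inf)
  have segment: "((\<lambda>t. \<phi>' t * f (\<phi> t)) has_integral integral {\<phi> a..\<phi> b} f) {a..b}"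
    if "a \<le> b" for b
  proof -
    have "\<phi> ` {a..b} \<subseteq> {\<phi> a..\<phi> b}"
      using that by (auto intro!: mono_onD[OF \<phi>(2)])
    then have "((\<lambda>t. \<phi>' t *\<^sub>R f (\<phi> t)) has_integral integral {\<phi> a..\<phi> b} f) {a..b}"
      using that mono_onD[OF \<phi>(2), of a b] \<phi>'(1)
      by (intro has_integral_substitution_strong[of "{a}"])
         (auto intro: continuous_on_subset[OF f(1)] continuous_on_subset[OF \<phi>(1)]
           has_field_derivative_at_within)
    then show ?thesis by simp
  qed
  show "(\<lambda>t. \<phi>' t * f (\<phi> t)) integrable_on {a..b}" for b
    using segment by (cases "a \<le> b") auto
  have "((\<lambda>b. integral {\<phi> a..\<phi> b} f) \<longlongrightarrow> integral {\<phi> a..} f) at_top"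
    using tendsto_integral_atLeastAtMost_at_top[OF f(2,3)] \<phi>(3) by (rule filterlim_compose)
  moreover have "\<forall>\<^sub>F b in at_top. integral {\<phi> a..\<phi> b} f = integral {a..b} (\<lambda>t. \<phi>' t * f (\<phi> t))"
    using eventually_ge_at_top[of a] by eventually_elim (use segment integral_unique in metis)
  ultimately show "((\<lambda>b. integral {a..b} (\<lambda>t. \<phi>' t * f (\<phi> t))) \<longlongrightarrow> integral {\<phi> a..} f) at_top"
    by (rule Lim_transform_eventually)
  show "\<phi>' t * f (\<phi> t) \<ge> 0" if "t \<ge> a" for t
    using that \<phi>'(2) f(3) mono_onD[OF \<phi>(2), of a t] by simp
qed

lemma integrable_on_continuous_dominated:
  fixes f g :: "'a::euclidean_space \<Rightarrow> real"
  assumes "continuous_on S f" "S \<in> sets lebesgue"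
    and "g integrable_on S" "\<And>x. x \<in> S \<Longrightarrow> \<bar>f x\<bar> \<le> g x"
  shows "f integrable_on S"
  using assms continuous_imp_measurable_on_sets_lebesgue
  by (intro measurable_bounded_by_integrable_imp_integrable[of f S g]) auto

lemma integral_less_atLeast:
  fixes f g :: "real \<Rightarrow> real"
  assumes cont: "continuous_on {a..} f" "continuous_on {a..} g"
    and int: "f integrable_on {a..}" "g integrable_on {a..}"
    and le: "\<And>t. t \<ge> a \<Longrightarrow> f t \<le> g t" and c: "c \<ge> a" "f c < g c"
  shows "integral {a..} f < integral {a..} g"
proof -
  define h where "h t = g t - f t" for t
  have h_cont: "continuous_on {a..c+1} h"
    unfolding h_def
    by (intro continuous_intros continuous_on_subset[OF cont(1)] continuous_on_subset[OF cont(2)])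
       auto
  have h_nonneg: "h t \<ge> 0" if "t \<ge> a" for t
    using le[OF that] by (simp add: h_def)
  have h_int: "h integrable_on {a..c+1}"
    using h_cont by (rule integrable_continuous_interval)
  have "integral {a..c+1} h \<noteq> 0"
  proof
    assume "integral {a..c+1} h = 0"
    then have "h c = 0"
      using integral_eq_0_iff[OF h_cont] c(1) h_nonneg by force
    with c(2) show False by (simp add: h_def)
  qed
  moreover have "integral {a..c+1} h \<ge> 0"
    using h_int h_nonneg by (intro integral_nonneg) auto
  moreover have "integral {a..c+1} h \<le> integral {a..} h"
    using h_int integrable_diff[OF int(2,1)] h_nonneg unfolding h_def
    by (intro integral_subset_le) auto
  moreover have "integral {a..} h = integral {a..} g - integral {a..} f"
    unfolding h_def using int by (intro integral_diff)
  ultimately show ?thesis by linarith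
qed

lemma inverse_add_second_order_expansion:
  fixes w p :: "'a::field"
  assumes "w \<noteq> 0" "w + p \<noteq> 0"
  shows "1 / (w + p) = 1 / w - p / w\<^sup>2 + p\<^sup>2 / (w\<^sup>2 * (w + p))"
  using assms by (simp add: divide_simps) algebra

lemma has_integral_inverse_square_plus_square:
  fixes r :: real
  assumes "r > 0"
  shows "((\<lambda>v. 1 / (v\<^sup>2 + r\<^sup>2)) has_integral pi / (2 * r)) {0..}"
proof -
  have "((\<lambda>v. 1 / (v\<^sup>2 + r\<^sup>2)) has_integral pi / (2 * r) - arctan (0 / r) / r) {0..}"
  proof (rule fundamental_theorem_of_calculus_atLeast)
    show "continuous_on {0..} (\<lambda>v. arctan (v / r) / r)"
      using assms by (intro continuous_intros) auto
    show "((\<lambda>v. arctan (v / r) / r) has_real_derivative 1 / (v\<^sup>2 + r\<^sup>2)) (at v)" for v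
      using assms
      by (auto intro!: derivative_eq_intros simp: divide_simps add_nonneg_eq_0_iff) algebra
    show "1 / (v\<^sup>2 + r\<^sup>2) \<ge> 0" for v
      by simp
    show "((\<lambda>v. arctan (v / r) / r) \<longlongrightarrow> pi / (2 * r)) at_top"
      using assms by (real_asymp simp: inverse_eq_divide)
  qed
  then show ?thesis by simp
qed

lemma has_integral_linear_over_square_plus_square_squared:
  fixes r :: real
  assumes "r > 0"
  shows "((\<lambda>v. v / (v\<^sup>2 + r\<^sup>2)\<^sup>2) has_integral 1 / (2 * r\<^sup>2)) {0..}"
proof -
  have "((\<lambda>v. v / (v\<^sup>2 + r\<^sup>2)\<^sup>2) has_integral 0 - (- 1 / (2 * (0\<^sup>2 + r\<^sup>2)))) {0..}"
  proof (rule fundamental_theorem_of_calculus_atLeast)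
    show "continuous_on {0..} (\<lambda>v. - 1 / (2 * (v\<^sup>2 + r\<^sup>2)))"
      using assms by (intro continuous_intros) (auto simp: add_nonneg_eq_0_iff)
    show "((\<lambda>v. - 1 / (2 * (v\<^sup>2 + r\<^sup>2))) has_real_derivative v / (v\<^sup>2 + r\<^sup>2)\<^sup>2) (at v)" for v
      using assms
      by (auto intro!: derivative_eq_intros simp: divide_simps add_nonneg_eq_0_iff) algebra
    show "v / (v\<^sup>2 + r\<^sup>2)\<^sup>2 \<ge> 0" if "v \<ge> 0" for v
      using that by simp
    show "((\<lambda>v. - 1 / (2 * (v\<^sup>2 + r\<^sup>2))) \<longlongrightarrow> 0) at_top"
      using assms by (real_asymp simp: inverse_eq_divide)
  qed
  then show ?thesis by simp
qed

lemma has_integral_square_over_square_plus_square_cubed: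
  fixes r :: real
  assumes "r > 0"
  shows "((\<lambda>v. v\<^sup>2 / (v\<^sup>2 + r\<^sup>2) ^ 3) has_integral pi / (16 * r ^ 3)) {0..}"
proof -
  define H where "H v = v * (v\<^sup>2 - r\<^sup>2) / (8 * r\<^sup>2 * (v\<^sup>2 + r\<^sup>2)\<^sup>2) + arctan (v / r) / (8 * r ^ 3)"
    for v
  have "((\<lambda>v. v\<^sup>2 / (v\<^sup>2 + r\<^sup>2) ^ 3) has_integral pi / (16 * r ^ 3) - H 0) {0..}"
  proof (rule fundamental_theorem_of_calculus_atLeast)
    show "continuous_on {0..} H"
      unfolding H_def using assms by (intro continuous_intros) (auto simp: add_nonneg_pos)
    show "(H has_real_derivative v\<^sup>2 / (v\<^sup>2 + r\<^sup>2) ^ 3) (at v)" for v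
      unfolding H_def using assms
      by (auto intro!: derivative_eq_intros simp: divide_simps add_nonneg_eq_0_iff) algebra
    show "v\<^sup>2 / (v\<^sup>2 + r\<^sup>2) ^ 3 \<ge> 0" for v
      by simp
    show "(H \<longlongrightarrow> pi / (16 * r ^ 3)) at_top"
      unfolding H_def using assms by (real_asymp simp: inverse_eq_divide)
  qed
  then show ?thesis by (simp add: H_def)
qed

lemma continuous_on_inverse_quadratic:
  fixes a r :: real
  assumes "a \<ge> 0" "r > 0"
  shows "continuous_on {0..} (\<lambda>v. 1 / (v\<^sup>2 + 2 * a * v + r\<^sup>2))"
proof -
  have "v\<^sup>2 + 2 * a * v + r\<^sup>2 > 0" if "v \<ge> 0" for v
    using assms that by (intro add_nonneg_pos) auto
  then show ?thesis
    by (intro continuous_intros) force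
qed

lemma integrable_on_inverse_quadratic:
  fixes a r :: real
  assumes a: "a \<ge> 0" and r: "r > 0"
  shows "(\<lambda>v. 1 / (v\<^sup>2 + 2 * a * v + r\<^sup>2)) integrable_on {0..}"
proof (rule integrable_on_continuous_dominated[OF continuous_on_inverse_quadratic[OF a r]])
  show "(\<lambda>v. 1 / (v\<^sup>2 + r\<^sup>2)) integrable_on {0..}"
    using has_integral_inverse_square_plus_square[OF r] by blast
  show "\<bar>1 / (v\<^sup>2 + 2 * a * v + r\<^sup>2)\<bar> \<le> 1 / (v\<^sup>2 + r\<^sup>2)" if "v \<in> {0..}" for v
  proof -
    have "0 < v\<^sup>2 + r\<^sup>2" "v\<^sup>2 + r\<^sup>2 \<le> v\<^sup>2 + 2 * a * v + r\<^sup>2"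
      using that a r by (auto intro: add_nonneg_pos)
    then show ?thesis
      by (simp add: frac_le)
  qed
qed auto

lemma has_integral_sqrt_shift_substitution:
  fixes f :: "real \<Rightarrow> real" and a :: real
  assumes a: "a \<ge> 0"
    and f: "continuous_on {0..} f" "f integrable_on {0..}" "\<And>v. v \<ge> 0 \<Longrightarrow> f v \<ge> 0"
  shows "((\<lambda>t. f (sqrt (t + a\<^sup>2) - a) / (2 * sqrt (t + a\<^sup>2))) has_integral integral {0..} f) {0..}"
proof -
  define \<phi> where "\<phi> t = sqrt (t + a\<^sup>2) - a" for t
  define \<phi>' where "\<phi>' t = 1 / (2 * sqrt (t + a\<^sup>2))" for t
  have \<phi>_0: "\<phi> 0 = 0"
    using a by (simp add: \<phi>_def)
  have "((\<lambda>t. \<phi>' t * f (\<phi> t)) has_integral integral {\<phi> 0..} f) {0..}"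
  proof (rule has_integral_substitution_atLeast)
    show "continuous_on {\<phi> 0..} f" "f integrable_on {\<phi> 0..}" "\<And>v. v \<ge> \<phi> 0 \<Longrightarrow> f v \<ge> 0"
      using f by (simp_all add: \<phi>_0)
    show "continuous_on {0..} \<phi>"
      unfolding \<phi>_def by (intro continuous_intros)
    show "mono_on {0..} \<phi>"
      unfolding \<phi>_def by (intro mono_onI) (simp add: real_sqrt_le_mono)
    show "filterlim \<phi> at_top at_top"
      unfolding \<phi>_def by real_asymp
    show "(\<phi> has_real_derivative \<phi>' t) (at t)" if "t > 0" for t
    proof -
      have "t + a\<^sup>2 > 0"
        using that by (simp add: add_pos_nonneg)
      then show ?thesis
        unfolding \<phi>_def \<phi>'_def by (auto intro!: derivative_eq_intros simp: inverse_eq_divide)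
    qed
    show "\<phi>' t \<ge> 0" if "t \<ge> 0" for t
      using that a by (simp add: \<phi>'_def)
  qed
  then show ?thesis
    by (simp only: \<phi>_0) (simp add: \<phi>_def \<phi>'_def)
qed

lemma R_C_eq_integral_inverse_quadratic:
  fixes a r :: real
  assumes a: "a \<ge> 0" and r: "r > 0"
  shows "R_C (a\<^sup>2) (r\<^sup>2) = integral {0..} (\<lambda>v. 1 / (v\<^sup>2 + 2 * a * v + r\<^sup>2))"
proof -
  define f where "f v = 1 / (v\<^sup>2 + 2 * a * v + r\<^sup>2)" for v
  have "v\<^sup>2 + 2 * a * v + r\<^sup>2 > 0" if "v \<ge> 0" for v
    using that a r by (intro add_nonneg_pos) auto
  then have "((\<lambda>t. f (sqrt (t + a\<^sup>2) - a) / (2 * sqrt (t + a\<^sup>2))) has_integral integral {0..} f) {0..}"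
    using continuous_on_inverse_quadratic[OF a r] integrable_on_inverse_quadratic[OF a r] a
    by (intro has_integral_sqrt_shift_substitution) (auto simp: f_def less_imp_le)
  \<comment> \<open>For t = a = 0 both sides are the junk value 0: 0 powr (-1/2) = 0 and 1 / 0 = 0.\<close>
  moreover have "f (sqrt (t + a\<^sup>2) - a) / (2 * sqrt (t + a\<^sup>2))
      = (1/2) * ((t + a\<^sup>2) powr (-1/2) * inverse (t + r\<^sup>2))" if "t \<in> {0..}" for t
  proof -
    have "(sqrt (t + a\<^sup>2) - a)\<^sup>2 + 2 * a * (sqrt (t + a\<^sup>2) - a) + r\<^sup>2 = t + r\<^sup>2"
      using that a by (simp add: power2_eq_square algebra_simps)
    moreover have "(t + a\<^sup>2) powr (-1/2) = 1 / sqrt (t + a\<^sup>2)"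
      using that by (simp add: powr_minus_divide powr_half_sqrt)
    ultimately show ?thesis
      by (simp add: f_def inverse_eq_divide)
  qed
  ultimately have "((\<lambda>t. (1/2) * ((t + a\<^sup>2) powr (-1/2) * inverse (t + r\<^sup>2))) has_integral
      integral {0..} f) {0..}"
    by (rule has_integral_eq[rotated])
  from has_integral_mult_right[OF this, of 2]
  have "((\<lambda>t. (t + a\<^sup>2) powr (-1/2) * inverse (t + r\<^sup>2)) has_integral 2 * integral {0..} f) {0..}"
    by simp
  then have "integral {0..} (\<lambda>t. (t + a\<^sup>2) powr (-1/2) * inverse (t + r\<^sup>2)) = 2 * integral {0..} f"
    by (rule integral_unique)
  then show ?thesis
    unfolding R_C_def f_def by simp
qed

definition R_C_remainder :: "real \<Rightarrow> real \<Rightarrow> real" where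
  "R_C_remainder a r = integral {0..} (\<lambda>v. v\<^sup>2 / ((v\<^sup>2 + r\<^sup>2)\<^sup>2 * (v\<^sup>2 + 2 * a * v + r\<^sup>2)))"

lemma R_C_remainder_integrand_bounds:
  fixes a r v :: real
  assumes a: "a \<ge> 0" and r: "r > 0" and v: "v \<ge> 0"
  shows "v\<^sup>2 / (v\<^sup>2 + r\<^sup>2) ^ 3 / (1 + a / r) \<le> v\<^sup>2 / ((v\<^sup>2 + r\<^sup>2)\<^sup>2 * (v\<^sup>2 + 2 * a * v + r\<^sup>2))"
    and "v\<^sup>2 / ((v\<^sup>2 + r\<^sup>2)\<^sup>2 * (v\<^sup>2 + 2 * a * v + r\<^sup>2)) \<le> v\<^sup>2 / (v\<^sup>2 + r\<^sup>2) ^ 3"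
proof -
  define w where "w = v\<^sup>2 + r\<^sup>2"
  define W where "W = v\<^sup>2 + 2 * a * v + r\<^sup>2"
  have w: "w > 0"
    using r by (simp add: w_def add_nonneg_pos)
  have "(1 + a / r) * w - W = a / r * (v - r)\<^sup>2"
    using r by (simp add: w_def W_def field_simps power2_eq_square)
  then have "W \<le> (1 + a / r) * w"
    using a r by (smt (verit) divide_nonneg_pos mult_nonneg_nonneg zero_le_power2)
  moreover have "w \<le> W"
    using a v by (simp add: w_def W_def)
  ultimately have "w\<^sup>2 * W \<le> w\<^sup>2 * ((1 + a / r) * w)" "w\<^sup>2 * w \<le> w\<^sup>2 * W"
    by (simp_all add: mult_left_mono)
  moreover have "0 < w\<^sup>2 * w" "0 < w\<^sup>2 * W"
    using w \<open>w \<le> W\<close> by simp_all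
  ultimately have "v\<^sup>2 / (w\<^sup>2 * ((1 + a / r) * w)) \<le> v\<^sup>2 / (w\<^sup>2 * W)"
    "v\<^sup>2 / (w\<^sup>2 * W) \<le> v\<^sup>2 / (w\<^sup>2 * w)"
    by (simp_all add: divide_left_mono mult_pos_pos)
  then show "v\<^sup>2 / (v\<^sup>2 + r\<^sup>2) ^ 3 / (1 + a / r) \<le> v\<^sup>2 / ((v\<^sup>2 + r\<^sup>2)\<^sup>2 * (v\<^sup>2 + 2 * a * v + r\<^sup>2))"
    and "v\<^sup>2 / ((v\<^sup>2 + r\<^sup>2)\<^sup>2 * (v\<^sup>2 + 2 * a * v + r\<^sup>2)) \<le> v\<^sup>2 / (v\<^sup>2 + r\<^sup>2) ^ 3"
    by (simp_all add: w_def W_def power3_eq_cube power2_eq_square mult_ac)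
qed

lemma R_C_remainder_integrand_strict_bounds:
  fixes a r v :: real
  assumes a: "a > 0" and r: "r > 0" and v: "v > 0" "v \<noteq> r"
  shows "v\<^sup>2 / (v\<^sup>2 + r\<^sup>2) ^ 3 / (1 + a / r) < v\<^sup>2 / ((v\<^sup>2 + r\<^sup>2)\<^sup>2 * (v\<^sup>2 + 2 * a * v + r\<^sup>2))"
    and "v\<^sup>2 / ((v\<^sup>2 + r\<^sup>2)\<^sup>2 * (v\<^sup>2 + 2 * a * v + r\<^sup>2)) < v\<^sup>2 / (v\<^sup>2 + r\<^sup>2) ^ 3"
proof -
  define w where "w = v\<^sup>2 + r\<^sup>2"
  define W where "W = v\<^sup>2 + 2 * a * v + r\<^sup>2"
  have w: "w > 0"
    using r by (simp add: w_def add_nonneg_pos)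
  have "(1 + a / r) * w - W = a / r * (v - r)\<^sup>2"
    using r by (simp add: w_def W_def field_simps power2_eq_square)
  then have "W < (1 + a / r) * w"
    using a r v by (smt (verit) divide_pos_pos mult_pos_pos zero_less_power2 right_minus_eq)
  moreover have "w < W"
    using a v by (simp add: w_def W_def)
  ultimately have "w\<^sup>2 * W < w\<^sup>2 * ((1 + a / r) * w)" "w\<^sup>2 * w < w\<^sup>2 * W"
    using w by simp_all
  moreover have "0 < w\<^sup>2 * w" "0 < w\<^sup>2 * W" "0 < v\<^sup>2"
    using w \<open>w < W\<close> v by simp_all
  ultimately have "v\<^sup>2 / (w\<^sup>2 * ((1 + a / r) * w)) < v\<^sup>2 / (w\<^sup>2 * W)"
    "v\<^sup>2 / (w\<^sup>2 * W) < v\<^sup>2 / (w\<^sup>2 * w)"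
    by (simp_all add: divide_strict_left_mono mult_pos_pos)
  then show "v\<^sup>2 / (v\<^sup>2 + r\<^sup>2) ^ 3 / (1 + a / r) < v\<^sup>2 / ((v\<^sup>2 + r\<^sup>2)\<^sup>2 * (v\<^sup>2 + 2 * a * v + r\<^sup>2))"
    and "v\<^sup>2 / ((v\<^sup>2 + r\<^sup>2)\<^sup>2 * (v\<^sup>2 + 2 * a * v + r\<^sup>2)) < v\<^sup>2 / (v\<^sup>2 + r\<^sup>2) ^ 3"
    by (simp_all add: w_def W_def power3_eq_cube power2_eq_square mult_ac)
qed

lemma continuous_on_R_C_remainder_integrand:
  fixes a r :: real
  assumes "a \<ge> 0" "r > 0"
  shows "continuous_on {0..} (\<lambda>v. v\<^sup>2 / ((v\<^sup>2 + r\<^sup>2)\<^sup>2 * (v\<^sup>2 + 2 * a * v + r\<^sup>2)))"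
proof -
  have "v\<^sup>2 + r\<^sup>2 > 0" "v\<^sup>2 + 2 * a * v + r\<^sup>2 > 0" if "v \<ge> 0" for v
    using assms that by (auto intro: add_nonneg_pos)
  then show ?thesis
    by (intro continuous_intros) force
qed

lemma has_integral_R_C_remainder:
  fixes a r :: real
  assumes a: "a \<ge> 0" and r: "r > 0"
  shows "((\<lambda>v. v\<^sup>2 / ((v\<^sup>2 + r\<^sup>2)\<^sup>2 * (v\<^sup>2 + 2 * a * v + r\<^sup>2))) has_integral R_C_remainder a r) {0..}"
proof -
  have "(\<lambda>v. v\<^sup>2 / ((v\<^sup>2 + r\<^sup>2)\<^sup>2 * (v\<^sup>2 + 2 * a * v + r\<^sup>2))) integrable_on {0..}"
  proof (rule integrable_on_continuous_dominated)
    show "(\<lambda>v. v\<^sup>2 / (v\<^sup>2 + r\<^sup>2) ^ 3) integrable_on {0..}"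
      using has_integral_square_over_square_plus_square_cubed[OF r] by blast
    show "\<bar>v\<^sup>2 / ((v\<^sup>2 + r\<^sup>2)\<^sup>2 * (v\<^sup>2 + 2 * a * v + r\<^sup>2))\<bar> \<le> v\<^sup>2 / (v\<^sup>2 + r\<^sup>2) ^ 3"
      if "v \<in> {0..}" for v
      using that a R_C_remainder_integrand_bounds(2)[OF a r, of v] by simp
  qed (use continuous_on_R_C_remainder_integrand[OF a r] in auto)
  then show ?thesis
    unfolding R_C_remainder_def by blast
qed

lemma R_C_expansion:
  fixes a r :: real
  assumes a: "a \<ge> 0" and r: "r > 0"
  shows "R_C (a\<^sup>2) (r\<^sup>2) = pi / (2 * r) - a / r\<^sup>2 + 4 * a\<^sup>2 * R_C_remainder a r"
proof -
  have "((\<lambda>v. 1 / (v\<^sup>2 + r\<^sup>2) - 2 * a * (v / (v\<^sup>2 + r\<^sup>2)\<^sup>2)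
        + 4 * a\<^sup>2 * (v\<^sup>2 / ((v\<^sup>2 + r\<^sup>2)\<^sup>2 * (v\<^sup>2 + 2 * a * v + r\<^sup>2))))
      has_integral pi / (2 * r) - 2 * a * (1 / (2 * r\<^sup>2)) + 4 * a\<^sup>2 * R_C_remainder a r) {0..}"
    by (intro has_integral_add has_integral_diff has_integral_mult_right
        has_integral_inverse_square_plus_square has_integral_linear_over_square_plus_square_squared
        has_integral_R_C_remainder a r)
  moreover have "1 / (v\<^sup>2 + r\<^sup>2) - 2 * a * (v / (v\<^sup>2 + r\<^sup>2)\<^sup>2)
        + 4 * a\<^sup>2 * (v\<^sup>2 / ((v\<^sup>2 + r\<^sup>2)\<^sup>2 * (v\<^sup>2 + 2 * a * v + r\<^sup>2)))
      = 1 / (v\<^sup>2 + 2 * a * v + r\<^sup>2)" if "v \<in> {0..}" for v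
  proof -
    have reorder: "v\<^sup>2 + r\<^sup>2 + 2 * a * v = v\<^sup>2 + 2 * a * v + r\<^sup>2"
      by simp
    have "v\<^sup>2 + r\<^sup>2 \<noteq> 0" "v\<^sup>2 + 2 * a * v + r\<^sup>2 \<noteq> 0"
      using a r that by (auto intro!: add_nonneg_pos less_imp_neq[symmetric])
    from inverse_add_second_order_expansion[of "v\<^sup>2 + r\<^sup>2" "2 * a * v", unfolded reorder, OF this]
    show ?thesis
      by (simp add: power_mult_distrib)
  qed
  ultimately have "((\<lambda>v. 1 / (v\<^sup>2 + 2 * a * v + r\<^sup>2))
      has_integral pi / (2 * r) - 2 * a * (1 / (2 * r\<^sup>2)) + 4 * a\<^sup>2 * R_C_remainder a r) {0..}"
    by (rule has_integral_eq[rotated])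
  then show ?thesis
    using R_C_eq_integral_inverse_quadratic[OF a r] by (simp add: integral_unique)
qed

lemma R_C_remainder_0:
  fixes r :: real
  assumes r: "r > 0"
  shows "R_C_remainder 0 r = pi / (16 * r ^ 3)"
proof -
  have "(\<lambda>v. v\<^sup>2 / ((v\<^sup>2 + r\<^sup>2)\<^sup>2 * (v\<^sup>2 + 2 * 0 * v + r\<^sup>2))) = (\<lambda>v. v\<^sup>2 / (v\<^sup>2 + r\<^sup>2) ^ 3)"
    by (simp add: fun_eq_iff power2_eq_square power3_eq_cube)
  then show ?thesis
    unfolding R_C_remainder_def
    using has_integral_square_over_square_plus_square_cubed[OF r] by (simp add: integral_unique)
qed

lemma R_C_remainder_bounds:
  fixes a r :: real
  assumes a: "a > 0" and r: "r > 0"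
  shows "pi / (16 * r ^ 3) / (1 + a / r) < R_C_remainder a r"
    and "R_C_remainder a r < pi / (16 * r ^ 3)"
proof -
  let ?\<rho> = "\<lambda>v. v\<^sup>2 / ((v\<^sup>2 + r\<^sup>2)\<^sup>2 * (v\<^sup>2 + 2 * a * v + r\<^sup>2))"
  let ?\<kappa> = "\<lambda>v. v\<^sup>2 / (v\<^sup>2 + r\<^sup>2) ^ 3"
  have \<kappa>: "(?\<kappa> has_integral pi / (16 * r ^ 3)) {0..}"
    by (rule has_integral_square_over_square_plus_square_cubed[OF r])
  have \<rho>: "(?\<rho> has_integral R_C_remainder a r) {0..}"
    using has_integral_R_C_remainder a r by simp
  have \<rho>_cont: "continuous_on {0..} ?\<rho>"
    using continuous_on_R_C_remainder_integrand a r by simp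
  have \<kappa>_cont: "continuous_on {0..} ?\<kappa>"
    using r by (intro continuous_intros) (auto simp: add_nonneg_pos)
  have strict: "?\<kappa> (2 * r) / (1 + a / r) < ?\<rho> (2 * r)" "?\<rho> (2 * r) < ?\<kappa> (2 * r)"
    using R_C_remainder_integrand_strict_bounds[OF a r, of "2 * r"] r by simp_all
  have "1 + a / r > 0"
    using a r by (simp add: add_pos_pos)
  then have "integral {0..} (\<lambda>v. ?\<kappa> v / (1 + a / r)) < integral {0..} ?\<rho>"
    using \<kappa>_cont \<rho>_cont has_integral_divide[OF \<kappa>] \<rho> strict(1) r
      R_C_remainder_integrand_bounds(1)[OF less_imp_le[OF a] r]
    by (intro integral_less_atLeast[where c = "2 * r"]) (auto intro!: continuous_intros)
  then show "pi / (16 * r ^ 3) / (1 + a / r) < R_C_remainder a r"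
    unfolding integral_unique[OF has_integral_divide[OF \<kappa>]] integral_unique[OF \<rho>] .
  have "integral {0..} ?\<rho> < integral {0..} ?\<kappa>"
    using \<kappa>_cont \<rho>_cont \<kappa> \<rho> strict(2) r
      R_C_remainder_integrand_bounds(2)[OF less_imp_le[OF a] r]
    by (intro integral_less_atLeast[where c = "2 * r"]) auto
  then show "R_C_remainder a r < pi / (16 * r ^ 3)"
    unfolding integral_unique[OF \<kappa>] integral_unique[OF \<rho>] .
qed

lemma powr_three_halves:
  fixes y :: real
  assumes "y \<ge> 0"
  shows "y powr (3/2) = sqrt y ^ 3"
proof -
  have "y powr (3/2) = y powr (1 + 1/2)"
    by simp
  also have "\<dots> = y * sqrt y"
    using assms by (subst powr_add) (simp add: powr_half_sqrt)
  finally show ?thesis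
    using assms by (simp add: power3_eq_cube)
qed

theorem mainTheorem2:
  fixes x y :: real
  assumes "x \<ge> 0" and "y > 0"
  shows "\<exists>\<theta>::real.
           R_C x y = pi / (2 * sqrt y) - sqrt x / y + pi * x * \<theta> / (4 * y powr (3/2))
         \<and> 1 / (1 + sqrt (x / y)) \<le> \<theta> \<and> \<theta> \<le> 1
         \<and> ((1 / (1 + sqrt (x / y)) = \<theta> \<or> \<theta> = 1) \<longleftrightarrow> x = 0)"
proof -
  define a r where "a = sqrt x" and "r = sqrt y"
  have a: "a \<ge> 0" "x = a\<^sup>2" "sqrt x = a" and r: "r > 0" "y = r\<^sup>2" "sqrt y = r"
    using assms by (simp_all add: a_def r_def)
  define P where "P = pi / (16 * r ^ 3)"
  have P: "P > 0"
    using r by (simp add: P_def)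
  define \<theta> where "\<theta> = R_C_remainder a r / P"
  have "pi * x * \<theta> / (4 * y powr (3/2)) = 4 * a\<^sup>2 * R_C_remainder a r"
    using a(2) r(1,3) P assms(2) by (simp add: powr_three_halves \<theta>_def P_def)
  then have expansion:
    "R_C x y = pi / (2 * sqrt y) - sqrt x / y + pi * x * \<theta> / (4 * y powr (3/2))"
    using R_C_expansion[OF a(1) r(1)] a(2,3) r(2,3) by simp
  have ratio: "sqrt (x / y) = a / r"
    by (simp add: a_def r_def real_sqrt_divide)
  show ?thesis
  proof (cases "x = 0")
    case True
    then have "\<theta> = 1"
      using R_C_remainder_0[OF r(1)] r(1) by (simp add: \<theta>_def a_def P_def)
    with True show ?thesis
      using expansion by (intro exI[of _ \<theta>]) simp
  next
    case False
    then have "a > 0"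
      using a by simp
    from R_C_remainder_bounds[OF this r(1)]
    have "1 / (1 + a / r) < \<theta>" "\<theta> < 1"
      using P by (simp_all add: \<theta>_def P_def[symmetric] pos_less_divide_eq pos_divide_less_eq)
    with False show ?thesis
      using expansion ratio by (intro exI[of _ \<theta>]) auto
  qed
qed

end
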